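(* For every real $\varepsilon$ with $0<\varepsilon<1$, let $\varepsilon'=\varepsilon/(4-2\varepsilon)$ and let $S=\{p,a,b,q\}\subset\mathbb{R}$ with $p=0$, $a=\varepsilon'$, $b=1+\varepsilon'$, $q=1+2\varepsilon'$, equipped with the distance $|xy|$ equal to the absolute difference. Let $G'$ be the path $p,a,b,q$ (a $1$-spanner for $S$), and let $G$ be the graph obtained from $G'$ by the construction in the context with $f=1$ (for any tie-breaking). Then $G$ has edge set $E'\cup\{\{p,b\},\{a,q\}\}$, and for the matching $F=\{\{p,a\},\{b,q\}\}$ we have $\delta_{G\setminus F}(p,q)/\delta_{K_S\setminus F}(p,q)=3-\varepsilon$. In particular the stretch factor $3t$ in Theorem 1 cannot be replaced by any constant smaller than $3t$ in general.
   Context: For a finite metric space $(S,|\cdot|)$, $K_S$ is the complete graph on $S$ with edge weights $|xy|$; $\delta_X(x,y)$ is shortest-path distance in an edge-weighted graph $X$; $X\setminus F$ is $X$ with the edges of $F$ removed. A graph $G'$ on $S$ is a $t$-spanner if $\delta_{G'}(x,y)\le t|xy|$ for all $x,y$. Construction (with $f=1$): for each edge $\{x,y\}$ of $G'=(S,E')$, let $c_{xy}$ be a point of $S\setminus\{x,y\}$ minimizing $|xc|+|cy|$ (ties broken arbitrarily); $G=(S,E)$ with $E=E'\cup\{\{x,c_{xy}\},\{c_{xy},y\}:\{x,y\}\in E'\}$. *)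

theory Defs
  imports Complex_Main
begin

text \<open>Edge-weighted graphs on a vertex type 'a: edges are 2-element sets, the weight of
  edge {x,y} is the metric distance d x y.\<close>

definition complete_graph :: "'a set \<Rightarrow> 'a set set" where
  "complete_graph S = {{x, y} | x y. x \<in> S \<and> y \<in> S \<and> x \<noteq> y}"

definition is_walk :: "'a set set \<Rightarrow> 'a list \<Rightarrow> bool" where
  "is_walk E xs \<longleftrightarrow> xs \<noteq> [] \<and> (\<forall>i. Suc i < length xs \<longrightarrow> {xs ! i, xs ! Suc i} \<in> E)"

definition walk_length :: "('a \<Rightarrow> 'a \<Rightarrow> real) \<Rightarrow> 'a list \<Rightarrow> real" where
  "walk_length d xs = (\<Sum>i < length xs - 1. d (xs ! i) (xs ! Suc i))"

definition sp_dist :: "('a \<Rightarrow> 'a \<Rightarrow> real) \<Rightarrow> 'a set set \<Rightarrow> 'a \<Rightarrow> 'a \<Rightarrow> real" where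
  "sp_dist d E x y = Inf {walk_length d xs | xs. is_walk E xs \<and> hd xs = x \<and> last xs = y}"

text \<open>c is a valid choice of the points c_xy of the construction (f = 1):
  for each edge {x,y} of E', c {x,y} is a point of S - {x,y} minimising |xc| + |cy|.\<close>
definition valid_choice :: "('a \<Rightarrow> 'a \<Rightarrow> real) \<Rightarrow> 'a set \<Rightarrow> 'a set set \<Rightarrow> ('a set \<Rightarrow> 'a) \<Rightarrow> bool" where
  "valid_choice d S E' c \<longleftrightarrow>
     (\<forall>x y. {x, y} \<in> E' \<longrightarrow> c {x, y} \<in> S - {x, y} \<and>
        (\<forall>z \<in> S - {x, y}. d x (c {x, y}) + d (c {x, y}) y \<le> d x z + d z y))"

definition construct_edges :: "'a set set \<Rightarrow> ('a set \<Rightarrow> 'a) \<Rightarrow> 'a set set" where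
  "construct_edges E' c = E' \<union> {e. \<exists>x y. {x, y} \<in> E' \<and> (e = {x, c {x, y}} \<or> e = {c {x, y}, y})}"

end

theory Submission
  imports Defs
begin

text \<open>On the line the best middle point for the edge {p, a} is b and for {b, q} it is a, so the
  construction adds exactly the shortcuts {p, b} and {a, q}. Once the matching F fails, the
  only route from p to q in G is the zigzag p, b, a, q of length 3 + 2\<epsilon>', whereas K_S keeps
  the direct edge of length 1 + 2\<epsilon>'. Shortest-path distances are certified from below by
  potentials that are 1-Lipschitz along the edges.\<close>

lemma is_walk_singleton [simp]: "is_walk E [x]"
  by (simp add: is_walk_def)

lemma is_walk_Cons_Cons [simp]:
  "is_walk E (x # y # xs) \<longleftrightarrow> {x, y} \<in> E \<and> is_walk E (y # xs)"
  unfolding is_walk_def by (auto simp: less_Suc_eq_0_disj nth_Cons split: nat.split)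

lemma walk_length_singleton [simp]: "walk_length d [x] = 0"
  by (simp add: walk_length_def)

lemma walk_length_Cons_Cons [simp]:
  "walk_length d (x # y # xs) = d x y + walk_length d (y # xs)"
  unfolding walk_length_def by (simp add: sum.lessThan_Suc_shift del: sum.lessThan_Suc)

lemma walk_length_ge_potential_diff:
  fixes \<phi> :: "'a \<Rightarrow> real"
  assumes lipschitz: "\<And>u v. {u, v} \<in> E \<Longrightarrow> \<bar>\<phi> u - \<phi> v\<bar> \<le> d u v"
    and "is_walk E xs"
  shows "\<bar>\<phi> (hd xs) - \<phi> (last xs)\<bar> \<le> walk_length d xs"
  using assms(2)
proof (induction xs rule: induct_list012)
  case 1
  then show ?case by (simp add: is_walk_def)
next
  case (2 x)
  show ?case by simp
next
  case (3 x y zs)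
  then have "\<bar>\<phi> y - \<phi> (last (y # zs))\<bar> \<le> walk_length d (y # zs)" and "{x, y} \<in> E"
    by simp_all
  moreover have "\<bar>\<phi> x - \<phi> (last (y # zs))\<bar> \<le> \<bar>\<phi> x - \<phi> y\<bar> + \<bar>\<phi> y - \<phi> (last (y # zs))\<bar>"
    by linarith
  ultimately show ?case using lipschitz[of x y] by simp
qed

lemma sp_dist_eq_potential_diff:
  fixes \<phi> :: "'a \<Rightarrow> real"
  assumes lipschitz: "\<And>u v. {u, v} \<in> E \<Longrightarrow> \<bar>\<phi> u - \<phi> v\<bar> \<le> d u v"
    and walk: "is_walk E xs" "hd xs = x" "last xs = y"
    and tight: "walk_length d xs = \<bar>\<phi> x - \<phi> y\<bar>"
  shows "sp_dist d E x y = \<bar>\<phi> x - \<phi> y\<bar>"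
  unfolding sp_dist_def
proof (rule cInf_eq_minimum)
  show "\<bar>\<phi> x - \<phi> y\<bar> \<in> {walk_length d xs |xs. is_walk E xs \<and> hd xs = x \<and> last xs = y}"
    using walk tight by (intro CollectI exI[of _ xs]) simp
next
  fix l assume "l \<in> {walk_length d xs |xs. is_walk E xs \<and> hd xs = x \<and> last xs = y}"
  then obtain ys where "l = walk_length d ys" "is_walk E ys" "hd ys = x" "last ys = y"
    by auto
  then show "\<bar>\<phi> x - \<phi> y\<bar> \<le> l"
    using walk_length_ge_potential_diff[OF lipschitz, where xs = ys] by simp
qed

lemma sp_dist_edge_eq_dist:
  fixes x y :: "'a::metric_space"
  assumes "{x, y} \<in> E"
  shows "sp_dist dist E x y = dist x y"
proof -
  have "sp_dist dist E x y = \<bar>dist x x - dist x y\<bar>"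
  proof (rule sp_dist_eq_potential_diff)
    show "\<bar>dist x u - dist x v\<bar> \<le> dist u v" for u v
      using abs_dist_diff_le[of u x v] by (simp add: dist_commute)
    show "is_walk E [x, y]"
      using assms by simp
  qed simp_all
  then show ?thesis by simp
qed

lemma valid_choice_unique_minimizer:
  assumes "valid_choice d S E' c" "{x, y} \<in> E'" "z \<in> S - {x, y}"
    and "\<And>w. w \<in> S - {x, y} \<Longrightarrow> w \<noteq> z \<Longrightarrow> d x z + d z y < d x w + d w y"
  shows "c {x, y} = z"
  using assms unfolding valid_choice_def by (metis not_less)

lemma construct_edges_eq:
  assumes "\<And>e. e \<in> E' \<Longrightarrow> \<exists>x y. e = {x, y}"
  shows "construct_edges E' c = E' \<union> (\<Union>e \<in> E'. (\<lambda>v. {v, c e}) ` e)"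
  unfolding construct_edges_def
proof (intro equalityI subsetI)
  fix f assume "f \<in> E' \<union> (\<Union>e \<in> E'. (\<lambda>v. {v, c e}) ` e)"
  then consider "f \<in> E'" | e v where "e \<in> E'" "v \<in> e" "f = {v, c e}"
    by blast
  then show "f \<in> E' \<union> {f. \<exists>x y. {x, y} \<in> E' \<and> (f = {x, c {x, y}} \<or> f = {c {x, y}, y})}"
  proof cases
    case 2
    obtain x y where "e = {x, y}" using assms \<open>e \<in> E'\<close> by blast
    with 2 show ?thesis by (auto simp: insert_commute)
  qed simp
qed (auto simp: insert_commute)

lemma valid_choice_path_on_line:
  fixes p a b q :: real
  assumes "p < a" "a < b" "b < q"
    and "valid_choice dist {p, a, b, q} {{p, a}, {a, b}, {b, q}} c"
  shows "c {p, a} = b" and "c {b, q} = a" and "c {a, b} \<in> {p, q}"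
proof -
  show "c {p, a} = b"
    by (rule valid_choice_unique_minimizer[OF assms(4)])
      (use assms(1-3) in \<open>auto simp: dist_real_def\<close>)
  show "c {b, q} = a"
    by (rule valid_choice_unique_minimizer[OF assms(4)])
      (use assms(1-3) in \<open>auto simp: dist_real_def\<close>)
  show "c {a, b} \<in> {p, q}"
    using assms unfolding valid_choice_def by auto
qed

lemma construct_edges_path_on_line:
  fixes p a b q :: real
  assumes "p < a" "a < b" "b < q"
    and "valid_choice dist {p, a, b, q} {{p, a}, {a, b}, {b, q}} c"
  shows "construct_edges {{p, a}, {a, b}, {b, q}} c = {{p, a}, {a, b}, {b, q}} \<union> {{p, b}, {a, q}}"
proof -
  note choice = valid_choice_path_on_line[OF assms]
  have "construct_edges {{p, a}, {a, b}, {b, q}} c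
      = {{p, a}, {a, b}, {b, q}} \<union> {{p, b}, {a, b}, {a, c {a, b}}, {b, c {a, b}}, {b, a}, {q, a}}"
    using choice(1,2) by (subst construct_edges_eq) (auto simp: insert_commute)
  moreover from choice(3) have "c {a, b} = p \<or> c {a, b} = q"
    by simp
  ultimately show ?thesis
    by (elim disjE) (simp_all add: insert_commute)
qed

lemma sp_dist_detour_on_line:
  fixes p a b q :: real
  assumes "p < a" "a < b" "b < q"
  shows "sp_dist dist {{a, b}, {p, b}, {a, q}} p q = (b - p) + (b - a) + (q - a)"
proof -
  \<comment> \<open>arc length from p along the zigzag p, b, a, q\<close>
  define \<phi> where "\<phi> x = (if x = p then 0 else if x = b then b - p
      else if x = a then 2 * b - p - a else 2 * b - p - 2 * a + q)" for x
  have "sp_dist dist {{a, b}, {p, b}, {a, q}} p q = \<bar>\<phi> p - \<phi> q\<bar>"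
  proof (rule sp_dist_eq_potential_diff)
    show "\<bar>\<phi> u - \<phi> v\<bar> \<le> dist u v" if "{u, v} \<in> {{a, b}, {p, b}, {a, q}}" for u v
      using that assms by (auto simp: doubleton_eq_iff dist_real_def \<phi>_def)
    show "is_walk {{a, b}, {p, b}, {a, q}} [p, b, a, q]"
      by (simp add: insert_commute)
    show "walk_length dist [p, b, a, q] = \<bar>\<phi> p - \<phi> q\<bar>"
      using assms by (simp add: dist_real_def \<phi>_def)
  qed simp_all
  then show ?thesis
    using assms by (simp add: \<phi>_def)
qed

lemma fault_tolerant_stretch_of_path_on_line:
  fixes p a b q :: real
  defines "E' \<equiv> {{p, a}, {a, b}, {b, q}}" and "F \<equiv> {{p, a}, {b, q}}"
  assumes "p < a" "a < b" "b < q"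
    and "valid_choice dist {p, a, b, q} E' c"
  shows "construct_edges E' c = E' \<union> {{p, b}, {a, q}}"
    and "sp_dist dist (construct_edges E' c - F) p q
        / sp_dist dist (complete_graph {p, a, b, q} - F) p q
      = ((b - p) + (b - a) + (q - a)) / (q - p)" (is ?ratio)
proof -
  show edges: "construct_edges E' c = E' \<union> {{p, b}, {a, q}}"
    using construct_edges_path_on_line assms unfolding E'_def by blast
  have "{a, b} \<notin> F" "{p, b} \<notin> F" "{a, q} \<notin> F" "{p, q} \<notin> F"
    using assms(3-5) unfolding F_def by (auto simp: doubleton_eq_iff)
  moreover have "{p, a} \<in> F" "{b, q} \<in> F"
    unfolding F_def by simp_all
  ultimately have "construct_edges E' c - F = {{a, b}, {p, b}, {a, q}}"
    unfolding edges unfolding E'_def by (simp add: insert_Diff_if insert_commute)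
  moreover have "{p, q} \<in> complete_graph {p, a, b, q} - F"
    using \<open>{p, q} \<notin> F\<close> assms(3-5) unfolding complete_graph_def by force
  ultimately show ?ratio
    using assms(3-5) by (simp add: sp_dist_detour_on_line sp_dist_edge_eq_dist dist_real_def)
qed

theorem mainTheorem3:
  fixes \<epsilon> :: real and c :: "real set \<Rightarrow> real"
  assumes "0 < \<epsilon>" and "\<epsilon> < 1"
  defines "\<epsilon>' \<equiv> \<epsilon> / (4 - 2 * \<epsilon>)"
  defines "p \<equiv> (0::real)" and "a \<equiv> \<epsilon>'" and "b \<equiv> 1 + \<epsilon>'" and "q \<equiv> 1 + 2 * \<epsilon>'"
  defines "S \<equiv> {p, a, b, q}"
  defines "d \<equiv> (\<lambda>x y :: real. \<bar>x - y\<bar>)"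
  defines "E' \<equiv> {{p, a}, {a, b}, {b, q}}"
  defines "F \<equiv> {{p, a}, {b, q}}"
  assumes "valid_choice d S E' c"
  shows "construct_edges E' c = E' \<union> {{p, b}, {a, q}}
    \<and> sp_dist d (construct_edges E' c - F) p q / sp_dist d (complete_graph S - F) p q = 3 - \<epsilon>"
proof -
  have "0 < \<epsilon>'" and "\<epsilon>' < 1 / 2"
    using assms(1,2) unfolding \<epsilon>'_def by (simp_all add: field_simps)
  then have order: "p < a" "a < b" "b < q"
    unfolding p_def a_def b_def q_def by simp_all
  have "d = dist"
    unfolding d_def by (simp add: fun_eq_iff dist_real_def)
  note stretch = fault_tolerant_stretch_of_path_on_line[OF order, of c,
      folded E'_def F_def S_def \<open>d = dist\<close>, OF assms(12)]
  have "3 + 2 * \<epsilon>' = (3 - \<epsilon>) * (1 + 2 * \<epsilon>')"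
    using assms(2) unfolding \<epsilon>'_def by (simp add: field_simps)
  with \<open>0 < \<epsilon>'\<close> have "((b - p) + (b - a) + (q - a)) / (q - p) = 3 - \<epsilon>"
    unfolding p_def a_def b_def q_def by (simp add: field_simps)
  with stretch show ?thesis
    by simp
qed

end
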